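(* Every forest (in particular every tree) of order $n$ has at most $2^{n/2}$ independent dominating sets. Moreover, there are infinitely many trees $T$ such that, with $n$ the order of $T$, $T$ has at least $\frac{1}{2}2^{n/2}$ independent dominating sets.
   Context: An independent dominating set of $G=(V,E)$ is a set $D\subseteq V$ with no edge inside $D$ such that every vertex outside $D$ has at least one neighbour in $D$. Order = number of vertices. *)

theory Defs
  imports Complex_Main
begin

definition simple_graph :: "'a set \<Rightarrow> 'a set set \<Rightarrow> bool" where
  "simple_graph V E \<longleftrightarrow> finite V \<and>
     (\<forall>e\<in>E. \<exists>u v. e = {u, v} \<and> u \<noteq> v \<and> u \<in> V \<and> v \<in> V)"

definition adj :: "'a set set \<Rightarrow> 'a \<Rightarrow> 'a \<Rightarrow> bool" where
  "adj E u v \<longleftrightarrow> {u, v} \<in> E"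

definition is_cycle :: "'a set set \<Rightarrow> 'a list \<Rightarrow> bool" where
  "is_cycle E cs \<longleftrightarrow> length cs \<ge> 3 \<and> distinct cs \<and>
     (\<forall>i < length cs - 1. adj E (cs ! i) (cs ! Suc i)) \<and>
     adj E (last cs) (hd cs)"

definition forest :: "'a set \<Rightarrow> 'a set set \<Rightarrow> bool" where
  "forest V E \<longleftrightarrow> simple_graph V E \<and> \<not> (\<exists>cs. is_cycle E cs)"

definition connected_graph :: "'a set \<Rightarrow> 'a set set \<Rightarrow> bool" where
  "connected_graph V E \<longleftrightarrow>
     (\<forall>u\<in>V. \<forall>v\<in>V. (u, v) \<in> {(x, y). adj E x y}\<^sup>*)"

definition tree :: "'a set \<Rightarrow> 'a set set \<Rightarrow> bool" where
  "tree V E \<longleftrightarrow> forest V E \<and> connected_graph V E \<and> V \<noteq> {}"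

definition indep_dom_set :: "'a set \<Rightarrow> 'a set set \<Rightarrow> 'a set \<Rightarrow> bool" where
  "indep_dom_set V E D \<longleftrightarrow> D \<subseteq> V \<and>
     (\<forall>u\<in>D. \<forall>v\<in>D. \<not> adj E u v) \<and>
     (\<forall>v\<in>V - D. \<exists>u\<in>D. adj E v u)"

definition num_ids :: "'a set \<Rightarrow> 'a set set \<Rightarrow> nat" where
  "num_ids V E = card {D. indep_dom_set V E D}"

end

theory Submission
  imports Defs
begin

text \<open>Upper bound: a forest with an edge has a leaf \<open>v\<close> with neighbour \<open>u\<close>, and every
  independent dominating set contains \<open>u\<close> or \<open>v\<close>. Removing \<open>x\<close> from a set containing it
  gives an independent dominating set of the forest with the closed neighbourhood of \<open>x\<close>
  deleted, which has at most \<open>n - 2\<close> vertices; hence the count is at most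
  \<open>2 \<cdot> 2\<^bsup>(n-2)/2\<^esup> = 2\<^bsup>n/2\<^esup>\<close>.
  Lower bound: in the spider with one leg of length one and \<open>k\<close> legs of length two (order
  \<open>2k + 2\<close>), the leaf of the short leg together with one vertex from each long leg is an
  independent dominating set, giving \<open>2\<^sup>k\<close> of them.\<close>

lemma adj_commute: "adj E u v \<longleftrightarrow> adj E v u"
  by (simp add: adj_def insert_commute)

lemma simple_graph_adjD:
  assumes "simple_graph V E" "adj E u v"
  shows "u \<in> V" "v \<in> V" "u \<noteq> v"
  using assms unfolding simple_graph_def adj_def by (fastforce simp: doubleton_eq_iff)+

lemma is_cycle_mono: "is_cycle E' cs \<Longrightarrow> E' \<subseteq> E \<Longrightarrow> is_cycle E cs"
  unfolding is_cycle_def adj_def by blast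

lemma forest_Diff: "forest V E \<Longrightarrow> forest (V - S) {e \<in> E. e \<inter> S = {}}"
  unfolding forest_def
proof (elim conjE, intro conjI)
  show "simple_graph V E \<Longrightarrow> simple_graph (V - S) {e \<in> E. e \<inter> S = {}}"
    unfolding simple_graph_def by fastforce
  show "\<not> (\<exists>cs. is_cycle E cs) \<Longrightarrow> \<not> (\<exists>cs. is_cycle {e \<in> E. e \<inter> S = {}} cs)"
    using is_cycle_mono[of "{e \<in> E. e \<inter> S = {}}" _ E] by blast
qed

lemma is_cycle_adj_next:
  assumes "is_cycle E cs" "i < length cs"
  shows "adj E (cs ! i) (cs ! (Suc i mod length cs))"
proof (cases "Suc i < length cs")
  case True
  then show ?thesis using assms(1) unfolding is_cycle_def by auto
next
  case False
  then have "Suc i = length cs" using assms(2) by simp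
  then have "i = length cs - 1" "Suc i mod length cs = 0" by auto
  moreover have "cs \<noteq> []" using assms(2) by auto
  ultimately show ?thesis using assms(1) unfolding is_cycle_def by (simp add: hd_conv_nth last_conv_nth)
qed

lemma is_cycle_two_neighbours:
  assumes "is_cycle E cs" "x \<in> set cs"
  obtains y z where "y \<noteq> z" "y \<in> set cs" "z \<in> set cs" "adj E x y" "adj E x z"
proof -
  define n where "n = length cs"
  have n: "3 \<le> n" and "distinct cs" using assms(1) unfolding is_cycle_def n_def by auto
  obtain i where i: "i < n" "cs ! i = x" using assms(2) unfolding n_def by (auto simp: in_set_conv_nth)
  define k where "k = Suc i mod n"
  define j where "j = (i + n - 1) mod n"
  have k: "k < n" and j: "j < n" using n unfolding k_def j_def by simp_all
  have "Suc j mod n = i"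
    using n i(1) unfolding j_def by (simp add: mod_Suc_eq)
  then have "adj E x (cs ! j)"
    using is_cycle_adj_next[OF assms(1), of j] i j unfolding n_def by (simp add: adj_commute)
  moreover have "adj E x (cs ! k)"
    using is_cycle_adj_next[OF assms(1), of i] i unfolding n_def k_def by simp
  moreover have "k \<noteq> j"
  proof (cases "Suc i < n")
    case True
    then show ?thesis using n unfolding j_def k_def by (cases i) auto
  next
    case False
    then have "i = n - 1" using i by simp
    then have "i + n - 1 = (n - 2) + n" using n by simp
    then have "j = ((n - 2) + n) mod n" unfolding j_def by (simp only:)
    also have "\<dots> = n - 2" using n by (simp only: mod_add_self2) simp
    finally show ?thesis using \<open>i = n - 1\<close> n unfolding k_def by simp
  qed
  then have "cs ! k \<noteq> cs ! j"
    using \<open>distinct cs\<close> j k unfolding n_def by (simp add: nth_eq_iff_index_eq)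
  moreover have "cs ! k \<in> set cs" "cs ! j \<in> set cs" using j k unfolding n_def by simp_all
  ultimately show ?thesis using that by blast
qed

definition closed_nbhd :: "'a set set \<Rightarrow> 'a \<Rightarrow> 'a set" where
  "closed_nbhd E x = insert x {y. adj E x y}"

lemma indep_dom_set_Diff_closed_nbhd:
  assumes D: "indep_dom_set V E D" and "x \<in> D"
  shows "indep_dom_set (V - closed_nbhd E x) {e \<in> E. e \<inter> closed_nbhd E x = {}} (D - {x})"
  unfolding indep_dom_set_def
proof (intro conjI ballI)
  have indep: "\<forall>u\<in>D. \<forall>v\<in>D. \<not> adj E u v" and dom: "\<forall>v\<in>V - D. \<exists>u\<in>D. adj E v u"
    and "D \<subseteq> V" using D unfolding indep_dom_set_def by auto
  then show "D - {x} \<subseteq> V - closed_nbhd E x"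
    using \<open>x \<in> D\<close> unfolding closed_nbhd_def by auto
  show "\<not> adj {e \<in> E. e \<inter> closed_nbhd E x = {}} u v" if "u \<in> D - {x}" "v \<in> D - {x}" for u v
    using indep that unfolding adj_def by auto
  fix w assume w: "w \<in> V - closed_nbhd E x - (D - {x})"
  then obtain u where u: "u \<in> D" "adj E w u"
    using dom unfolding closed_nbhd_def by auto
  have "u \<notin> closed_nbhd E x"
    using indep u w \<open>x \<in> D\<close> unfolding closed_nbhd_def by (auto simp: adj_commute)
  then show "\<exists>u\<in>D - {x}. adj {e \<in> E. e \<inter> closed_nbhd E x = {}} w u"
    using u w unfolding adj_def closed_nbhd_def by auto
qed

lemma finite_indep_dom_sets: "finite V \<Longrightarrow> finite {D. indep_dom_set V E D}"
  by (rule finite_subset[of _ "Pow V"]) (auto simp: indep_dom_set_def)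

lemma card_indep_dom_sets_containing_le:
  assumes "finite V"
  shows "card {D. indep_dom_set V E D \<and> x \<in> D}
           \<le> num_ids (V - closed_nbhd E x) {e \<in> E. e \<inter> closed_nbhd E x = {}}"
  unfolding num_ids_def
proof (rule card_inj_on_le[where f = "\<lambda>D. D - {x}"])
  show "inj_on (\<lambda>D. D - {x}) {D. indep_dom_set V E D \<and> x \<in> D}"
    by (rule inj_onI) (metis CollectD insert_Diff)
  show "(\<lambda>D. D - {x}) ` {D. indep_dom_set V E D \<and> x \<in> D}
          \<subseteq> {D. indep_dom_set (V - closed_nbhd E x) {e \<in> E. e \<inter> closed_nbhd E x = {}} D}"
    by (auto intro: indep_dom_set_Diff_closed_nbhd)
qed (use assms finite_indep_dom_sets in blast)

lemma card_Diff_closed_nbhd_le: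
  assumes "simple_graph V E" "adj E x y"
  shows "card (V - closed_nbhd E x) + 2 \<le> card V"
proof -
  have fin: "finite V" using assms(1) unfolding simple_graph_def by simp
  have sub: "closed_nbhd E x \<subseteq> V"
    using simple_graph_adjD[OF assms(1)] assms(2) unfolding closed_nbhd_def by blast
  have "card {x, y} \<le> card (closed_nbhd E x)"
    using assms(2) sub fin unfolding closed_nbhd_def
    by (intro card_mono) (auto intro: finite_subset)
  moreover have "x \<noteq> y" using simple_graph_adjD[OF assms] by blast
  moreover have "card (V - closed_nbhd E x) = card V - card (closed_nbhd E x)"
    using sub fin by (intro card_Diff_subset) (auto intro: finite_subset)
  moreover have "card (closed_nbhd E x) \<le> card V" using card_mono[OF fin sub] .
  ultimately show ?thesis by simp
qed

definition is_path :: "'a set set \<Rightarrow> 'a list \<Rightarrow> bool" where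
  "is_path E p \<longleftrightarrow> distinct p \<and> (\<forall>i < length p - 1. adj E (p ! i) (p ! Suc i))"

lemma is_path_Cons:
  assumes "is_path E p" "p \<noteq> []" "w \<notin> set p" "adj E w (hd p)"
  shows "is_path E (w # p)"
  using assms unfolding is_path_def
  by (auto simp: hd_conv_nth nth_Cons split: nat.split)

lemma is_cycle_take_is_path:
  assumes "is_path E p" "2 \<le> j" "j < length p" "adj E (p ! j) (p ! 0)"
  shows "is_cycle E (take (Suc j) p)"
proof -
  have "take (Suc j) p \<noteq> []" "p \<noteq> []" using assms(3) by auto
  then show ?thesis
    using assms unfolding is_cycle_def is_path_def by (auto simp: hd_conv_nth last_conv_nth)
qed

text \<open>The first vertex of a longest path is a leaf: any other neighbour would either extend
  the path or close a cycle.\<close>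
lemma forest_has_leaf:
  assumes "forest V E" "E \<noteq> {}"
  obtains v u where "adj E v u" "\<And>w. adj E v w \<Longrightarrow> w = u"
proof -
  have sg: "simple_graph V E" and acyclic: "\<And>cs. \<not> is_cycle E cs"
    using assms(1) unfolding forest_def by auto
  have fin: "finite V" using sg unfolding simple_graph_def by simp
  define P where "P p \<longleftrightarrow> is_path E p \<and> set p \<subseteq> V \<and> 2 \<le> length p" for p
  obtain e where "e \<in> E" using assms(2) by blast
  then obtain a b where "{a, b} \<in> E" "a \<noteq> b" "a \<in> V" "b \<in> V"
    using sg unfolding simple_graph_def by auto
  then have "P [a, b]" unfolding P_def is_path_def adj_def by auto
  moreover have "length p < card V + 1" if "P p" for p
  proof -
    have "length p = card (set p)" using that distinct_card unfolding P_def is_path_def by metis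
    also have "\<dots> \<le> card V" using that fin card_mono unfolding P_def by metis
    finally show ?thesis by simp
  qed
  ultimately obtain p where "P p" and longest: "\<And>q. P q \<Longrightarrow> length q \<le> length p"
    using ex_has_greatest_nat[of P "[a, b]" length "card V + 1"] by blast
  then have path: "is_path E p" and pV: "set p \<subseteq> V" and two: "2 \<le> length p"
    unfolding P_def by auto
  have ne: "p \<noteq> []" using two by auto
  have "w = p ! 1" if w: "adj E (p ! 0) w" for w
  proof (cases "w \<in> set p")
    case False
    have "hd p = p ! 0" using ne by (simp add: hd_conv_nth)
    then have "adj E w (hd p)" using w by (simp add: adj_commute)
    then have "is_path E (w # p)" using is_path_Cons[OF path ne False] by simp
    moreover have "w \<in> V" using simple_graph_adjD(2)[OF sg w] .
    ultimately have "P (w # p)" using pV two unfolding P_def by simp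
    then show ?thesis using longest[of "w # p"] by simp
  next
    case True
    then obtain j where j: "j < length p" "p ! j = w" by (auto simp: in_set_conv_nth)
    have "j \<noteq> 0" using j simple_graph_adjD(3)[OF sg w] by metis
    moreover have "\<not> 2 \<le> j"
    proof
      assume "2 \<le> j"
      have "adj E (p ! j) (p ! 0)" using w j(2) by (simp add: adj_commute)
      then show False using is_cycle_take_is_path[OF path \<open>2 \<le> j\<close> j(1)] acyclic by blast
    qed
    ultimately have "j = 1" by simp
    then show ?thesis using j by simp
  qed
  moreover have "adj E (p ! 0) (p ! 1)" using path two unfolding is_path_def by auto
  ultimately show ?thesis using that by blast
qed

lemma indep_dom_set_leaf:
  assumes "indep_dom_set V E D" "v \<in> V" "\<And>w. adj E v w \<Longrightarrow> w = u"
  shows "v \<in> D \<or> u \<in> D"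
  using assms unfolding indep_dom_set_def by blast

lemma num_ids_forest_le:
  "forest V E \<Longrightarrow> real (num_ids V E) \<le> 2 powr (real (card V) / 2)"
proof (induction "card V" arbitrary: V E rule: less_induct)
  case less
  have sg: "simple_graph V E" using less.prems unfolding forest_def by simp
  have fin: "finite V" using sg unfolding simple_graph_def by simp
  show ?case
  proof (cases "E = {}")
    case True
    then have "{D. indep_dom_set V E D} = {V}"
      unfolding indep_dom_set_def adj_def by blast
    then show ?thesis by (simp add: num_ids_def ge_one_powr_ge_zero)
  next
    case False
    obtain v u where vu: "adj E v u" and leaf: "\<And>w. adj E v w \<Longrightarrow> w = u"
      using forest_has_leaf[OF less.prems False] by blast
    let ?ids_with = "\<lambda>x. {D. indep_dom_set V E D \<and> x \<in> D}"
    have half: "real (card (?ids_with x)) \<le> 2 powr ((real (card V) - 2) / 2)"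
      if "adj E x y" for x y
    proof -
      let ?V' = "V - closed_nbhd E x" and ?E' = "{e \<in> E. e \<inter> closed_nbhd E x = {}}"
      have small: "card ?V' + 2 \<le> card V" using card_Diff_closed_nbhd_le[OF sg that] .
      have "card (?ids_with x) \<le> num_ids ?V' ?E'"
        using card_indep_dom_sets_containing_le[OF fin] .
      then have "real (card (?ids_with x)) \<le> real (num_ids ?V' ?E')" by simp
      also have "\<dots> \<le> 2 powr (real (card ?V') / 2)"
        using less.hyps[of ?V' ?E'] small forest_Diff[OF less.prems] by simp
      also have "\<dots> \<le> 2 powr ((real (card V) - 2) / 2)"
        using small by (intro powr_mono) auto
      finally show ?thesis .
    qed
    have "{D. indep_dom_set V E D} \<subseteq> ?ids_with v \<union> ?ids_with u"
      using indep_dom_set_leaf[OF _ simple_graph_adjD(1)[OF sg vu] leaf] by blast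
    then have "num_ids V E \<le> card (?ids_with v \<union> ?ids_with u)"
      unfolding num_ids_def using finite_indep_dom_sets[OF fin]
      by (intro card_mono) (auto intro: finite_subset)
    also have "\<dots> \<le> card (?ids_with v) + card (?ids_with u)" by (rule card_Un_le)
    finally have "real (num_ids V E) \<le> 2 * 2 powr ((real (card V) - 2) / 2)"
      using half[OF vu] half[of u v] vu by (simp add: adj_commute)
    also have "\<dots> = 2 powr (real (card V) / 2)"
      by (simp add: powr_diff diff_divide_distrib)
    finally show ?thesis .
  qed
qed

definition parent_edges :: "'a set \<Rightarrow> 'a \<Rightarrow> ('a \<Rightarrow> 'a) \<Rightarrow> 'a set set" where
  "parent_edges V r p = {{p y, y} | y. y \<in> V - {r}}"

lemma adj_parent_edges:
  "adj (parent_edges V r p) a b \<longleftrightarrow> (a \<in> V - {r} \<and> b = p a) \<or> (b \<in> V - {r} \<and> a = p b)"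
  unfolding adj_def parent_edges_def by (auto simp: doubleton_eq_iff)

context
  fixes V :: "'a :: wellorder set" and r :: 'a and p :: "'a \<Rightarrow> 'a"
  assumes parent: "\<And>y. y \<in> V - {r} \<Longrightarrow> p y \<in> V \<and> p y < y"
begin

text \<open>On a cycle, the largest vertex \<open>m\<close> has two distinct smaller neighbours, but the only
  neighbour of \<open>m\<close> below \<open>m\<close> is its parent.\<close>
lemma parent_edges_acyclic: "\<not> is_cycle (parent_edges V r p) cs"
proof
  assume cyc: "is_cycle (parent_edges V r p) cs"
  define m where "m = Max (set cs)"
  have "set cs \<noteq> {}" using cyc unfolding is_cycle_def by auto
  then have "m \<in> set cs" unfolding m_def by simp
  have down: "y = p m" if "y \<in> set cs" "adj (parent_edges V r p) m y" for y
  proof -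
    have "y \<le> m" using that(1) unfolding m_def by simp
    then show ?thesis using that(2) parent unfolding adj_parent_edges by fastforce
  qed
  obtain y z where "y \<noteq> z" "y \<in> set cs" "z \<in> set cs"
      "adj (parent_edges V r p) m y" "adj (parent_edges V r p) m z"
    using is_cycle_two_neighbours[OF cyc \<open>m \<in> set cs\<close>] .
  then show False using down by blast
qed

lemma tree_parent_edges:
  assumes "finite V" "r \<in> V"
  shows "tree V (parent_edges V r p)"
proof -
  let ?R = "{(x, y). adj (parent_edges V r p) x y}"
  have "simple_graph V (parent_edges V r p)"
    using assms(1) parent unfolding simple_graph_def parent_edges_def by fastforce
  moreover have to_root: "(y, r) \<in> ?R\<^sup>* \<and> (r, y) \<in> ?R\<^sup>*" if "y \<in> V" for y
    using that
  proof (induction y rule: less_induct)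
    case (less y)
    show ?case
    proof (cases "y = r")
      case False
      then have "(y, p y) \<in> ?R" "(p y, y) \<in> ?R" "(p y, r) \<in> ?R\<^sup>* \<and> (r, p y) \<in> ?R\<^sup>*"
        using less parent[of y] by (auto simp: adj_parent_edges)
      then show ?thesis by (meson converse_rtrancl_into_rtrancl rtrancl_into_rtrancl)
    qed simp
  qed
  moreover have "connected_graph V (parent_edges V r p)"
    unfolding connected_graph_def using to_root by (meson rtrancl_trans)
  ultimately show ?thesis
    unfolding tree_def forest_def using parent_edges_acyclic assms(2) by blast
qed

end

definition spider_parent :: "nat \<Rightarrow> nat" where
  "spider_parent y = (if odd y then y - 1 else 0)"

text \<open>Centre \<open>0\<close>, a leg \<open>0 - 1\<close> and legs \<open>0 - 2i+2 - 2i+3\<close> for \<open>i < k\<close>.\<close>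
definition spider :: "nat \<Rightarrow> nat set set" where
  "spider k = parent_edges {..<2 * k + 2} 0 spider_parent"

lemma tree_spider: "tree {..<2 * k + 2} (spider k)"
  unfolding spider_def
  by (rule tree_parent_edges) (auto simp: spider_parent_def)

definition leg_choice :: "nat \<Rightarrow> nat set \<Rightarrow> nat set" where
  "leg_choice k S = insert 1 ((\<lambda>i. 2 * i + 2) ` S \<union> (\<lambda>i. 2 * i + 3) ` ({..<k} - S))"

lemma mem_leg_choice:
  "a \<in> leg_choice k S \<longleftrightarrow> a = 1 \<or> (\<exists>i\<in>S. a = 2 * i + 2) \<or> (\<exists>i<k. i \<notin> S \<and> a = 2 * i + 3)"
  unfolding leg_choice_def by auto

lemma even_ne_odd_nat: "2 * i + 2 \<noteq> 2 * j + (3 :: nat)"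
  by presburger

lemma even_mem_leg_choice: "2 * i + 2 \<in> leg_choice k S \<longleftrightarrow> i \<in> S"
  unfolding mem_leg_choice using even_ne_odd_nat by auto

lemma odd_mem_leg_choice: "2 * i + 3 \<in> leg_choice k S \<longleftrightarrow> i < k \<and> i \<notin> S"
  unfolding mem_leg_choice using even_ne_odd_nat by (auto simp: eq_commute)

lemma spider_parent_notin_leg_choice:
  "a \<in> leg_choice k S \<Longrightarrow> spider_parent a \<notin> leg_choice k S"
  unfolding spider_parent_def mem_leg_choice by auto presburger+

lemma adj_spider:
  "adj (spider k) a b \<longleftrightarrow>
     (0 < a \<and> a < 2 * k + 2 \<and> b = spider_parent a) \<or> (0 < b \<and> b < 2 * k + 2 \<and> a = spider_parent b)"
  unfolding spider_def adj_parent_edges by auto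

lemma indep_dom_set_leg_choice:
  assumes "S \<subseteq> {..<k}"
  shows "indep_dom_set {..<2 * k + 2} (spider k) (leg_choice k S)"
  unfolding indep_dom_set_def
proof (intro conjI ballI)
  show "leg_choice k S \<subseteq> {..<2 * k + 2}" using assms unfolding leg_choice_def by auto
  show "\<not> adj (spider k) u v" if "u \<in> leg_choice k S" "v \<in> leg_choice k S" for u v
    using that spider_parent_notin_leg_choice unfolding adj_spider by blast
  fix w assume w: "w \<in> {..<2 * k + 2} - leg_choice k S"
  have "w \<noteq> 1" using w unfolding leg_choice_def by auto
  then consider "w = 0" | i where "w = 2 * i + 2" | i where "w = 2 * i + 3"
  proof -
    have "w = 0 \<or> w = 2 * (w div 2 - 1) + 2 \<or> w = 2 * ((w - 3) div 2) + 3"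
      using \<open>w \<noteq> 1\<close> by presburger
    then show thesis using that by blast
  qed
  then show "\<exists>u\<in>leg_choice k S. adj (spider k) w u"
  proof cases
    case 1
    have "1 \<in> leg_choice k S" "adj (spider k) 0 1" by (simp_all add: leg_choice_def adj_spider spider_parent_def)
    then show ?thesis using 1 by blast
  next
    case (2 i)
    then have "2 * i + 2 \<notin> leg_choice k S" "i < k" using w by auto
    then have "2 * i + 3 \<in> leg_choice k S" using even_mem_leg_choice odd_mem_leg_choice by blast
    moreover have "adj (spider k) w (2 * i + 3)"
      using 2 \<open>i < k\<close> unfolding adj_spider spider_parent_def by simp
    ultimately show ?thesis by blast
  next
    case (3 i)
    then have "2 * i + 3 \<notin> leg_choice k S" "i < k" using w by auto
    then have "2 * i + 2 \<in> leg_choice k S" using even_mem_leg_choice odd_mem_leg_choice by blast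
    moreover have "adj (spider k) w (2 * i + 2)"
      using 3 \<open>i < k\<close> unfolding adj_spider spider_parent_def by simp
    ultimately show ?thesis by blast
  qed
qed

lemma num_ids_spider_ge: "2 ^ k \<le> num_ids {..<2 * k + 2} (spider k)"
proof -
  have "inj_on (leg_choice k) (Pow {..<k})"
    by (rule inj_onI) (metis even_mem_leg_choice subsetI subset_antisym)
  then have "card (leg_choice k ` Pow {..<k}) = 2 ^ k" by (simp add: card_image card_Pow)
  moreover have "leg_choice k ` Pow {..<k} \<subseteq> {D. indep_dom_set {..<2 * k + 2} (spider k) D}"
    using indep_dom_set_leg_choice by blast
  ultimately show ?thesis
    unfolding num_ids_def by (metis card_mono finite_indep_dom_sets finite_lessThan)
qed

theorem mainTheorem17:
  shows "(\<forall>(V :: 'a set) E. forest V E \<longrightarrow>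
            real (num_ids V E) \<le> 2 powr (real (card V) / 2))
       \<and> (\<forall>N :: nat. \<exists>(V :: nat set) E. tree V E \<and> card V \<ge> N \<and>
            real (num_ids V E) \<ge> (1/2) * 2 powr (real (card V) / 2))"
proof (intro conjI allI impI)
  show "real (num_ids V E) \<le> 2 powr (real (card V) / 2)" if "forest V E" for V :: "'a set" and E
    using num_ids_forest_le[OF that] .
  fix N :: nat
  have "real (card {..<2 * N + 2}) / 2 = real (N + 1)" by simp
  then have "(1/2) * 2 powr (real (card {..<2 * N + 2}) / 2) = (1/2) * 2 ^ (N + 1)"
    by (simp only: powr_realpow[of 2] zero_less_numeral)
  also have "\<dots> = 2 ^ N" by simp
  also have "\<dots> \<le> real (num_ids {..<2 * N + 2} (spider N))"
    using num_ids_spider_ge[of N] by (metis of_nat_le_iff of_nat_numeral of_nat_power)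
  finally show "\<exists>(V :: nat set) E. tree V E \<and> card V \<ge> N \<and>
      real (num_ids V E) \<ge> (1/2) * 2 powr (real (card V) / 2)"
    using tree_spider[of N] by (intro exI[of _ "{..<2 * N + 2}"] exI[of _ "spider N"]) simp
qed

end
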